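(* Consider the $k$-prize collecting traveling salesman problem ($k$-PCTSP) on instances $(G,r,k,c,\pi)$ whose edge cost $c$ satisfies the triangle inequality. The algorithm $\mathcal{B}$ described below is a $4$-approximation algorithm for this problem: it returns a tour $T_{\mathrm{OUT}}$ containing $r$ and visiting at least $k$ vertices whose cost $\sum_{e\in E[T_{\mathrm{OUT}}]}c(e)+\sum_{v\notin V[T_{\mathrm{OUT}}]}\pi(v)$ is at most $4\,\mathrm{OPT}$, where $\mathrm{OPT}$ is the optimal value of the $k$-PCTSP instance.
   Context: A tour of a graph $G$ is a cyclic sequence of vertices $T=(u_1,\dots,u_m,u_1)$, with $E[T]=\{\{u_i,u_{i+1}\}: 1\le i\le m-1\}\cup\{\{u_m,u_1\}\}$ and $V[T]=\{u_1,\dots,u_m\}$. An instance of $k$-PCTSP consists of a complete graph $G=(V,E)$, a root $r\in V$, an integer $k>0$, a nonnegative edge cost $c:E\to\mathbb{R}_+$ and a nonnegative penalty $\pi:V\to\mathbb{R}_+$; a feasible solution is a tour $T$ with $r\in V[T]$ and $|V[T]|\ge k$, of cost $\sum_{e\in E[T]}c(e)+\sum_{v\in V\setminus V[T]}\pi(v)$, and $\mathrm{OPT}$ is the minimum cost. The rooted $k$-TSP instance $(G,r,k,c)$ asks for a tour containing $r$ with at least $k$ vertices minimizing $\sum_{e\in E[T]}c(e)$; the penalty TSP (PTSP) instance $(G,r,c,\pi)$ asks for a tour containing $r$ minimizing $\sum_{e\in E[T]}c(e)+\sum_{v\notin V[T]}\pi(v)$. Garg's algorithm is a 2-approximation algorithm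 for rooted $k$-TSP under the triangle inequality, and the Goemans–Williamson (GW) algorithm is a 2-approximation algorithm for PTSP under the triangle inequality. Algorithm $\mathcal{B}$: Step 1: apply Garg's algorithm to $(G,r,k,c)$, obtaining a tour $T_{\mathrm{Garg}}$. Step 2: apply the GW algorithm to $(G,r,c,\pi)$, obtaining a tour $T_{\mathrm{GW}}$. Step 3: merge $T_{\mathrm{Garg}}$ and $T_{\mathrm{GW}}$ (both pass through $r$) into a single closed walk and return the tour $T_{\mathrm{OUT}}$ obtained from it by shortcutting repeated vertices. *)

theory Defs
  imports "HOL-Analysis.Analysis" "HOL-Library.Sublist"
begin

text \<open>Complete graph on a finite vertex set V; an edge is a 2-element set {u,v}.
  Edge costs are given as a function on (2-element) vertex sets.\<close>

definition edges_of :: "'a set \<Rightarrow> 'a set set" where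
  "edges_of V = {{u, v} | u v. u \<in> V \<and> v \<in> V \<and> u \<noteq> v}"

text \<open>A tour is a cyclic sequence of vertices (u_1,...,u_m,u_1), represented by the
  nonempty list [u_1,...,u_m]; V[T] = set T.\<close>

definition is_tour :: "'a set \<Rightarrow> 'a list \<Rightarrow> bool" where
  "is_tour V T \<longleftrightarrow> T \<noteq> [] \<and> set T \<subseteq> V"

text \<open>Edge cost of a tour: sum over the m cyclically consecutive pairs
  {u_i,u_(i+1)} and {u_m,u_1}; a degenerate pair u = u (only possible when a
  vertex is followed by itself, e.g. m = 1) is not an edge and costs 0.\<close>

definition pair_cost :: "('a set \<Rightarrow> real) \<Rightarrow> 'a \<Rightarrow> 'a \<Rightarrow> real" where
  "pair_cost c u v = (if u = v then 0 else c {u, v})"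

definition tour_cost :: "('a set \<Rightarrow> real) \<Rightarrow> 'a list \<Rightarrow> real" where
  "tour_cost c T = (\<Sum>i<length T. pair_cost c (T ! i) (T ! ((i + 1) mod length T)))"

definition penalty_cost :: "'a set \<Rightarrow> ('a \<Rightarrow> real) \<Rightarrow> 'a list \<Rightarrow> real" where
  "penalty_cost V \<pi> T = (\<Sum>v\<in>V - set T. \<pi> v)"

definition metric_cost :: "'a set \<Rightarrow> ('a set \<Rightarrow> real) \<Rightarrow> bool" where
  "metric_cost V c \<longleftrightarrow>
     (\<forall>u\<in>V. \<forall>v\<in>V. \<forall>w\<in>V. u \<noteq> v \<and> v \<noteq> w \<and> u \<noteq> w \<longrightarrow> c {u, w} \<le> c {u, v} + c {v, w})"

definition ktsp_feasible :: "'a set \<Rightarrow> 'a \<Rightarrow> nat \<Rightarrow> 'a list \<Rightarrow> bool" where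
  "ktsp_feasible V r k T \<longleftrightarrow> is_tour V T \<and> r \<in> set T \<and> card (set T) \<ge> k"

definition ktsp_opt :: "'a set \<Rightarrow> 'a \<Rightarrow> nat \<Rightarrow> ('a set \<Rightarrow> real) \<Rightarrow> real" where
  "ktsp_opt V r k c = Inf (tour_cost c ` {T. ktsp_feasible V r k T})"

definition ptsp_feasible :: "'a set \<Rightarrow> 'a \<Rightarrow> 'a list \<Rightarrow> bool" where
  "ptsp_feasible V r T \<longleftrightarrow> is_tour V T \<and> r \<in> set T"

definition ptsp_cost :: "'a set \<Rightarrow> ('a set \<Rightarrow> real) \<Rightarrow> ('a \<Rightarrow> real) \<Rightarrow> 'a list \<Rightarrow> real" where
  "ptsp_cost V c \<pi> T = tour_cost c T + penalty_cost V \<pi> T"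

definition ptsp_opt :: "'a set \<Rightarrow> 'a \<Rightarrow> ('a set \<Rightarrow> real) \<Rightarrow> ('a \<Rightarrow> real) \<Rightarrow> real" where
  "ptsp_opt V r c \<pi> = Inf (ptsp_cost V c \<pi> ` {T. ptsp_feasible V r T})"

definition kpctsp_opt :: "'a set \<Rightarrow> 'a \<Rightarrow> nat \<Rightarrow> ('a set \<Rightarrow> real) \<Rightarrow> ('a \<Rightarrow> real) \<Rightarrow> real" where
  "kpctsp_opt V r k c \<pi> = Inf (ptsp_cost V c \<pi> ` {T. ktsp_feasible V r k T})"

text \<open>Step 3 of Algorithm B: the closed walk obtained by merging the two tours at r
  (each rotated to start at r, then concatenated), and a shortcut of it: a
  subsequence visiting every vertex of the walk exactly once.\<close>

definition merged_walk :: "'a \<Rightarrow> 'a list \<Rightarrow> 'a list \<Rightarrow> 'a list \<Rightarrow> bool" where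
  "merged_walk r T1 T2 W \<longleftrightarrow>
     (\<exists>i j. hd (rotate i T1) = r \<and> hd (rotate j T2) = r \<and> W = rotate i T1 @ rotate j T2)"

definition shortcut_of :: "'a list \<Rightarrow> 'a list \<Rightarrow> bool" where
  "shortcut_of W T \<longleftrightarrow> subseq T W \<and> distinct T \<and> set T = set W"

end

theory Submission
  imports Defs
begin

text \<open>Both tours pass through r, so cutting them open at r and concatenating gives a
  closed walk whose edge cost is the sum of the two tour costs; by the triangle
  inequality shortcutting does not increase it. The output visits every vertex of
  Garg's tour, hence at least k vertices, and every vertex of the GW tour, hence pays
  at most the GW penalties. Its cost is thus at most
  c(T_Garg) + (c(T_GW) + \<pi>(V - V[T_GW])) \<le> 2 OPT_kTSP + 2 OPT_PTSP, and both optima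
  are at most OPT, because every k-PCTSP solution is feasible for both problems and
  its cost dominates its edge cost.\<close>

fun path_cost :: "('a set \<Rightarrow> real) \<Rightarrow> 'a list \<Rightarrow> real" where
  "path_cost c (x # y # xs) = pair_cost c x y + path_cost c (y # xs)"
| "path_cost c _ = 0"

lemma path_cost_conv_sum:
  "path_cost c p = (\<Sum>i<length p - 1. pair_cost c (p ! i) (p ! Suc i))"
proof (induction c p rule: path_cost.induct)
  case (1 c x y xs)
  then show ?case by (simp add: sum.lessThan_Suc_shift del: sum.lessThan_Suc)
qed auto

lemma tour_cost_conv_path_cost:
  assumes "T \<noteq> []"
  shows "tour_cost c T = path_cost c (T @ [hd T])"
proof -
  let ?n = "length T"
  have "path_cost c (T @ [hd T]) =
      (\<Sum>i<?n. pair_cost c ((T @ [hd T]) ! i) ((T @ [hd T]) ! Suc i))"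
    by (simp add: path_cost_conv_sum)
  also have "\<dots> = (\<Sum>i<?n. pair_cost c (T ! i) (T ! ((i + 1) mod ?n)))"
  proof (rule sum.cong)
    fix i assume "i \<in> {..<?n}"
    then consider "Suc i < ?n" | "Suc i = ?n" by fastforce
    then show "pair_cost c ((T @ [hd T]) ! i) ((T @ [hd T]) ! Suc i) =
        pair_cost c (T ! i) (T ! ((i + 1) mod ?n))"
      by cases (use assms in \<open>auto simp: nth_append hd_conv_nth\<close>)
  qed simp
  finally show ?thesis unfolding tour_cost_def by simp
qed

lemma path_cost_append:
  assumes "xs \<noteq> []" "ys \<noteq> []"
  shows "path_cost c (xs @ ys) = path_cost c xs + pair_cost c (last xs) (hd ys) + path_cost c ys"
  using assms
proof (induction xs rule: induct_list012)
  case (2 x) then show ?case by (cases ys) auto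
qed auto

lemma tour_cost_rotate1: "tour_cost c (rotate1 T) = tour_cost c T"
proof (cases T)
  case (Cons x xs)
  show ?thesis
  proof (cases xs)
    case (Cons y ys)
    have "tour_cost c (rotate1 T) = path_cost c ((y # ys @ [x]) @ [y])"
      using \<open>T = x # xs\<close> Cons by (simp add: tour_cost_conv_path_cost)
    also have "\<dots> = path_cost c (y # ys @ [x]) + pair_cost c x y"
      by (subst path_cost_append) auto
    also have "\<dots> = tour_cost c T"
      using \<open>T = x # xs\<close> Cons by (simp add: tour_cost_conv_path_cost)
    finally show ?thesis .
  qed (use \<open>T = x # xs\<close> in simp)
qed simp

lemma tour_cost_rotate: "tour_cost c (rotate n T) = tour_cost c T"
  by (induction n) (simp_all add: tour_cost_rotate1)

lemma tour_cost_append_at_root: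
  assumes "xs \<noteq> []" "ys \<noteq> []" "hd xs = r" "hd ys = r"
  shows "tour_cost c (xs @ ys) = tour_cost c xs + tour_cost c ys"
proof -
  have "tour_cost c (xs @ ys) = path_cost c (xs @ ys @ [r])"
    using assms by (simp add: tour_cost_conv_path_cost)
  also have "\<dots> = path_cost c xs + pair_cost c (last xs) r + path_cost c (ys @ [r])"
    using assms by (subst path_cost_append) (auto simp: hd_append)
  also have "path_cost c xs + pair_cost c (last xs) r = path_cost c (xs @ [r])"
    using assms by (subst path_cost_append) auto
  finally show ?thesis using assms by (simp add: tour_cost_conv_path_cost)
qed

lemma pair_cost_nonneg:
  assumes "\<forall>e\<in>edges_of V. c e \<ge> 0" "u \<in> V" "v \<in> V"
  shows "pair_cost c u v \<ge> 0"
  using assms unfolding pair_cost_def edges_of_def by auto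

lemma pair_cost_triangle:
  assumes "metric_cost V c" "\<forall>e\<in>edges_of V. c e \<ge> 0" "u \<in> V" "v \<in> V" "w \<in> V"
  shows "pair_cost c u w \<le> pair_cost c u v + pair_cost c v w"
  using assms pair_cost_nonneg[OF assms(2), of u v] pair_cost_nonneg[OF assms(2), of v w]
  unfolding metric_cost_def pair_cost_def by (auto simp: insert_commute)

lemma tour_cost_nonneg:
  assumes "\<forall>e\<in>edges_of V. c e \<ge> 0" "set T \<subseteq> V"
  shows "tour_cost c T \<ge> 0"
  unfolding tour_cost_def
proof (intro sum_nonneg pair_cost_nonneg[OF assms(1)])
  fix i assume "i \<in> {..<length T}"
  then show "T ! i \<in> V" "T ! ((i + 1) mod length T) \<in> V"
    by (auto intro!: nth_mem[THEN subsetD[OF assms(2)]] mod_less_divisor)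
qed

lemma path_cost_ge_endpoints:
  assumes "metric_cost V c" "\<forall>e\<in>edges_of V. c e \<ge> 0" "set (u # xs @ [w]) \<subseteq> V"
  shows "pair_cost c u w \<le> path_cost c (u # xs @ [w])"
  using assms(3)
proof (induction xs arbitrary: u)
  case (Cons y ys)
  have "pair_cost c u w \<le> pair_cost c u y + pair_cost c y w"
    using pair_cost_triangle[OF assms(1,2)] Cons.prems by auto
  also have "pair_cost c y w \<le> path_cost c (y # ys @ [w])" using Cons by auto
  finally show ?case by simp
qed simp

lemma path_cost_subseq:
  assumes "metric_cost V c" "\<forall>e\<in>edges_of V. c e \<ge> 0"
  shows "subseq xs ys \<Longrightarrow> set (u # ys @ [w]) \<subseteq> V \<Longrightarrow>
    path_cost c (u # xs @ [w]) \<le> path_cost c (u # ys @ [w])"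
proof (induction xs ys arbitrary: u rule: list_emb.induct)
  case (list_emb_Nil ys)
  then show ?case using path_cost_ge_endpoints[OF assms] by simp
next
  case (list_emb_Cons xs ys y)
  let ?z = "hd (ys @ [w])"
  have "path_cost c (u # xs @ [w]) \<le> path_cost c (u # ys @ [w])"
    using list_emb_Cons by auto
  also have "\<dots> = pair_cost c u ?z + path_cost c (ys @ [w])"
    by (cases ys) auto
  also have "\<dots> \<le> pair_cost c u y + pair_cost c y ?z + path_cost c (ys @ [w])"
    using pair_cost_triangle[OF assms, of u y ?z] list_emb_Cons.prems by (cases ys) auto
  also have "\<dots> = path_cost c (u # (y # ys) @ [w])"
    by (cases ys) auto
  finally show ?case .
qed auto

lemma tour_cost_subseq:
  assumes "metric_cost V c" "\<forall>e\<in>edges_of V. c e \<ge> 0"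
    and "subseq T W" "T \<noteq> []" "set W \<subseteq> V"
  shows "tour_cost c T \<le> tour_cost c W"
proof -
  obtain t T' where T: "T = t # T'"
    using assms(4) by (cases T) auto
  obtain us vs where W: "W = us @ t # vs" and "subseq T' vs"
    using list_emb_ConsD[of "(=)" t T' W] assms(3) T by auto
  then have "subseq T' (vs @ us)"
    by (simp add: list_emb_prefix)
  have "tour_cost c T = path_cost c (t # T' @ [t])"
    using T by (simp add: tour_cost_conv_path_cost)
  also have "\<dots> \<le> path_cost c (t # (vs @ us) @ [t])"
    using path_cost_subseq[OF assms(1,2) \<open>subseq T' (vs @ us)\<close>] assms(5) W by auto
  also have "\<dots> = tour_cost c (rotate (length us) W)"
    using W by (simp add: tour_cost_conv_path_cost rotate_append)
  finally show ?thesis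
    by (simp add: tour_cost_rotate)
qed

lemma shortcut_of_merged_walk:
  assumes "metric_cost V c" "\<forall>e\<in>edges_of V. c e \<ge> 0"
    and "is_tour V T1" "is_tour V T2"
    and "merged_walk r T1 T2 W" "shortcut_of W T"
  shows "is_tour V T" "set T = set T1 \<union> set T2"
    and "tour_cost c T \<le> tour_cost c T1 + tour_cost c T2"
proof -
  obtain i j where ij: "hd (rotate i T1) = r" "hd (rotate j T2) = r"
    "W = rotate i T1 @ rotate j T2"
    using assms(5) unfolding merged_walk_def by auto
  have T12: "T1 \<noteq> []" "T2 \<noteq> []" "set T1 \<subseteq> V" "set T2 \<subseteq> V"
    using assms(3,4) unfolding is_tour_def by auto
  show setT: "set T = set T1 \<union> set T2"
    using assms(6) ij(3) unfolding shortcut_of_def by simp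
  then show "is_tour V T"
    using T12 unfolding is_tour_def by auto
  have "tour_cost c T \<le> tour_cost c W"
    using assms(6) setT T12
    by (intro tour_cost_subseq[OF assms(1,2)]) (auto simp: shortcut_of_def ij(3))
  also have "\<dots> = tour_cost c T1 + tour_cost c T2"
    using ij T12 by (simp add: tour_cost_append_at_root tour_cost_rotate)
  finally show "tour_cost c T \<le> tour_cost c T1 + tour_cost c T2" .
qed

lemma penalty_cost_nonneg:
  assumes "\<forall>v\<in>V. \<pi> v \<ge> 0"
  shows "penalty_cost V \<pi> T \<ge> 0"
  unfolding penalty_cost_def using assms by (intro sum_nonneg) auto

lemma penalty_cost_antimono:
  assumes "finite V" "\<forall>v\<in>V. \<pi> v \<ge> 0" "set T' \<subseteq> set T"
  shows "penalty_cost V \<pi> T \<le> penalty_cost V \<pi> T'"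
  unfolding penalty_cost_def using assms by (intro sum_mono2) auto

lemma ptsp_cost_nonneg:
  assumes "\<forall>e\<in>edges_of V. c e \<ge> 0" "\<forall>v\<in>V. \<pi> v \<ge> 0" "set T \<subseteq> V"
  shows "ptsp_cost V c \<pi> T \<ge> 0"
  unfolding ptsp_cost_def
  using tour_cost_nonneg[OF assms(1,3)] penalty_cost_nonneg[OF assms(2)] by simp

lemma ktsp_opt_le_kpctsp_opt:
  assumes "\<forall>e\<in>edges_of V. c e \<ge> 0" "\<forall>v\<in>V. \<pi> v \<ge> 0" "ktsp_feasible V r k T0"
  shows "ktsp_opt V r k c \<le> kpctsp_opt V r k c \<pi>"
  unfolding kpctsp_opt_def
proof (rule cInf_greatest)
  fix x assume "x \<in> ptsp_cost V c \<pi> ` {T. ktsp_feasible V r k T}"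
  then obtain T where T: "ktsp_feasible V r k T" "x = ptsp_cost V c \<pi> T" by auto
  have "ktsp_opt V r k c \<le> tour_cost c T"
    unfolding ktsp_opt_def
  proof (rule cInf_lower)
    show "bdd_below (tour_cost c ` {T. ktsp_feasible V r k T})"
      using tour_cost_nonneg[OF assms(1)]
      by (intro bdd_belowI[of _ 0]) (auto simp: ktsp_feasible_def is_tour_def)
  qed (use T in auto)
  also have "\<dots> \<le> x"
    using T penalty_cost_nonneg[OF assms(2)] unfolding ptsp_cost_def by simp
  finally show "ktsp_opt V r k c \<le> x" .
qed (use assms(3) in auto)

lemma ptsp_opt_le_kpctsp_opt:
  assumes "\<forall>e\<in>edges_of V. c e \<ge> 0" "\<forall>v\<in>V. \<pi> v \<ge> 0" "ktsp_feasible V r k T0"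
  shows "ptsp_opt V r c \<pi> \<le> kpctsp_opt V r k c \<pi>"
  unfolding kpctsp_opt_def ptsp_opt_def
proof (rule cInf_superset_mono)
  show "bdd_below (ptsp_cost V c \<pi> ` {T. ptsp_feasible V r T})"
    using ptsp_cost_nonneg[OF assms(1,2)]
    by (intro bdd_belowI[of _ 0]) (auto simp: ptsp_feasible_def is_tour_def)
qed (use assms(3) in \<open>auto simp: ktsp_feasible_def ptsp_feasible_def\<close>)

theorem theorem3:
  fixes V :: "'a set" and r :: 'a and k :: nat
    and c :: "'a set \<Rightarrow> real" and \<pi> :: "'a \<Rightarrow> real"
    and T_Garg T_GW W T_OUT :: "'a list"
  assumes "finite V" and "r \<in> V" and "k > 0"
    and "\<forall>e\<in>edges_of V. c e \<ge> 0"
    and "\<forall>v\<in>V. \<pi> v \<ge> 0"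
    and "metric_cost V c"
    and Garg: "ktsp_feasible V r k T_Garg"
              "tour_cost c T_Garg \<le> 2 * ktsp_opt V r k c"
    and GW: "ptsp_feasible V r T_GW"
            "ptsp_cost V c \<pi> T_GW \<le> 2 * ptsp_opt V r c \<pi>"
    and "merged_walk r T_Garg T_GW W"
    and "shortcut_of W T_OUT"
  shows "ktsp_feasible V r k T_OUT \<and> ptsp_cost V c \<pi> T_OUT \<le> 4 * kpctsp_opt V r k c \<pi>"
proof -
  have tours: "is_tour V T_Garg" "is_tour V T_GW"
    using Garg(1) GW(1) by (auto simp: ktsp_feasible_def ptsp_feasible_def)
  note out = shortcut_of_merged_walk[OF assms(6,4) tours assms(11,12)]
  have "card (set T_Garg) \<le> card (set T_OUT)"
    using out(1,2) by (intro card_mono) (auto simp: is_tour_def intro: finite_subset[OF _ assms(1)])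
  then have feasible: "ktsp_feasible V r k T_OUT"
    using Garg(1) out(1,2) by (auto simp: ktsp_feasible_def)
  have "penalty_cost V \<pi> T_OUT \<le> penalty_cost V \<pi> T_GW"
    using out(2) by (intro penalty_cost_antimono[OF assms(1,5)]) auto
  then have "ptsp_cost V c \<pi> T_OUT \<le> tour_cost c T_Garg + ptsp_cost V c \<pi> T_GW"
    using out(3) unfolding ptsp_cost_def by simp
  then show ?thesis
    using feasible Garg(2) GW(2) ktsp_opt_le_kpctsp_opt[OF assms(4,5) Garg(1)]
      ptsp_opt_le_kpctsp_opt[OF assms(4,5) Garg(1)]
    by linarith
qed

end
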